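(* Let $G=(V,E)$ be a finite, simple, connected reflective graph and $x\sim y$. Then $V_x^y$ is convex, and the subgraph induced on $V_x^y$ is reflective.
   Context: $d$ is the combinatorial distance. For adjacent $x\sim y$ let $V_x^y=\{v: d(v,x)<d(v,y)\}$, $V^{xy}=\{v:d(v,x)=d(v,y)\}$. A reflection from $x$ to $y$ is a graph automorphism $\phi$ with $\phi\circ\phi=\mathrm{id}$, $\phi(x)=y$, such that the edges between $V_x^y$ and $V_y^x$ are exactly $\{\{x',\phi(x')\}:x'\in V_x^y\}$ and $\phi$ fixes $V^{xy}$ pointwise. A graph is reflective if every edge admits a reflection. A set $W\subseteq V$ is convex if every shortest path in $G$ whose first and last vertices lie in $W$ has all its vertices in $W$. *)

theory Defs
  imports Main
begin

definition simple_graph :: "'a set \<Rightarrow> ('a \<Rightarrow> 'a \<Rightarrow> bool) \<Rightarrow> bool" where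
  "simple_graph V E \<longleftrightarrow> finite V \<and> (\<forall>u v. E u v \<longrightarrow> u \<in> V \<and> v \<in> V)
     \<and> (\<forall>u v. E u v \<longrightarrow> E v u) \<and> (\<forall>u. \<not> E u u)"

definition walk :: "'a set \<Rightarrow> ('a \<Rightarrow> 'a \<Rightarrow> bool) \<Rightarrow> 'a list \<Rightarrow> bool" where
  "walk V E p \<longleftrightarrow> p \<noteq> [] \<and> set p \<subseteq> V \<and> (\<forall>i. Suc i < length p \<longrightarrow> E (p ! i) (p ! Suc i))"

definition connected_graph :: "'a set \<Rightarrow> ('a \<Rightarrow> 'a \<Rightarrow> bool) \<Rightarrow> bool" where
  "connected_graph V E \<longleftrightarrow> V \<noteq> {} \<and>
     (\<forall>u\<in>V. \<forall>v\<in>V. \<exists>p. walk V E p \<and> hd p = u \<and> last p = v)"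

definition gdist :: "'a set \<Rightarrow> ('a \<Rightarrow> 'a \<Rightarrow> bool) \<Rightarrow> 'a \<Rightarrow> 'a \<Rightarrow> nat" where
  "gdist V E u v = (LEAST n. \<exists>p. walk V E p \<and> hd p = u \<and> last p = v \<and> length p = Suc n)"

definition shortest_path :: "'a set \<Rightarrow> ('a \<Rightarrow> 'a \<Rightarrow> bool) \<Rightarrow> 'a list \<Rightarrow> bool" where
  "shortest_path V E p \<longleftrightarrow> walk V E p \<and> length p = Suc (gdist V E (hd p) (last p))"

definition convex_set :: "'a set \<Rightarrow> ('a \<Rightarrow> 'a \<Rightarrow> bool) \<Rightarrow> 'a set \<Rightarrow> bool" where
  "convex_set V E W \<longleftrightarrow> W \<subseteq> V \<and>
     (\<forall>p. shortest_path V E p \<and> hd p \<in> W \<and> last p \<in> W \<longrightarrow> set p \<subseteq> W)"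

definition halfspace :: "'a set \<Rightarrow> ('a \<Rightarrow> 'a \<Rightarrow> bool) \<Rightarrow> 'a \<Rightarrow> 'a \<Rightarrow> 'a set" where
  "halfspace V E x y = {v \<in> V. gdist V E v x < gdist V E v y}"

definition midset :: "'a set \<Rightarrow> ('a \<Rightarrow> 'a \<Rightarrow> bool) \<Rightarrow> 'a \<Rightarrow> 'a \<Rightarrow> 'a set" where
  "midset V E x y = {v \<in> V. gdist V E v x = gdist V E v y}"

definition graph_automorphism :: "'a set \<Rightarrow> ('a \<Rightarrow> 'a \<Rightarrow> bool) \<Rightarrow> ('a \<Rightarrow> 'a) \<Rightarrow> bool" where
  "graph_automorphism V E \<phi> \<longleftrightarrow> bij_betw \<phi> V V \<and>
     (\<forall>u\<in>V. \<forall>v\<in>V. E u v \<longleftrightarrow> E (\<phi> u) (\<phi> v))"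

definition reflection :: "'a set \<Rightarrow> ('a \<Rightarrow> 'a \<Rightarrow> bool) \<Rightarrow> 'a \<Rightarrow> 'a \<Rightarrow> ('a \<Rightarrow> 'a) \<Rightarrow> bool" where
  "reflection V E x y \<phi> \<longleftrightarrow> graph_automorphism V E \<phi> \<and> (\<forall>v\<in>V. \<phi> (\<phi> v) = v) \<and> \<phi> x = y
     \<and> {{u, v} | u v. u \<in> halfspace V E x y \<and> v \<in> halfspace V E y x \<and> E u v}
        = {{u, \<phi> u} | u. u \<in> halfspace V E x y}
     \<and> (\<forall>v\<in>midset V E x y. \<phi> v = v)"

definition reflective :: "'a set \<Rightarrow> ('a \<Rightarrow> 'a \<Rightarrow> bool) \<Rightarrow> bool" where
  "reflective V E \<longleftrightarrow> (\<forall>x\<in>V. \<forall>y\<in>V. E x y \<longrightarrow> (\<exists>\<phi>. reflection V E x y \<phi>))"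

definition induced :: "('a \<Rightarrow> 'a \<Rightarrow> bool) \<Rightarrow> 'a set \<Rightarrow> 'a \<Rightarrow> 'a \<Rightarrow> bool" where
  "induced E W u v \<longleftrightarrow> E u v \<and> u \<in> W \<and> v \<in> W"

end

theory Submission
  imports Defs
begin

(* Halfspaces of parallel edges coincide: if q lies in V_x^y and phi is the reflection for xy,
  then V_q^(phi q) = V_x^y. Indeed the reflection rho for the edge q (phi q) must swap x and y,
  since xy crosses from V_q^(phi q) to V_(phi q)^q; so rho maps V_x^y into V_y^x, hence fixes no
  vertex of V_x^y and crosses no edge inside it, and V_x^y, connected to x along geodesics, lies
  in V_q^(phi q). Convexity follows: a vertex c outside V_x^y on a geodesic between vertices of
  V_x^y would be farther from both ends than phi c, or, if phi fixes c, would shorten the way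
  from one end to the mirror image of the other. The reflection sigma of an edge inside V_x^y
  fixes xy or moves it to a parallel edge, so sigma preserves V_x^y; as V_x^y is convex, distances
  in the induced subgraph are those of the graph, and sigma restricts to a reflection there. *)

locale connected_simple_graph =
  fixes V :: "'a set" and E :: "'a \<Rightarrow> 'a \<Rightarrow> bool"
  assumes simple: "simple_graph V E" and connected: "connected_graph V E"
begin

abbreviation d :: "'a \<Rightarrow> 'a \<Rightarrow> nat" where "d \<equiv> gdist V E"
abbreviation H :: "'a \<Rightarrow> 'a \<Rightarrow> 'a set" where "H \<equiv> halfspace V E"
abbreviation M :: "'a \<Rightarrow> 'a \<Rightarrow> 'a set" where "M \<equiv> midset V E"

lemma mem_halfspace: "w \<in> H a b \<longleftrightarrow> w \<in> V \<and> d w a < d w b"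
  by (simp add: halfspace_def)

lemma mem_midset: "w \<in> M a b \<longleftrightarrow> w \<in> V \<and> d w a = d w b"
  by (simp add: midset_def)

lemma halfspace_trichotomy: "w \<in> V \<Longrightarrow> w \<in> H a b \<or> w \<in> H b a \<or> w \<in> M a b"
  by (auto simp: mem_halfspace mem_midset)

lemma edge_in_V: "E u v \<Longrightarrow> u \<in> V \<and> v \<in> V"
  using simple unfolding simple_graph_def by blast

lemma edge_sym: "E u v \<Longrightarrow> E v u"
  using simple unfolding simple_graph_def by blast

lemma edge_irrefl: "\<not> E u u"
  using simple unfolding simple_graph_def by blast

lemma walk_Cons_Cons: "walk V E (u # v # p) \<longleftrightarrow> u \<in> V \<and> E u v \<and> walk V E (v # p)"
  unfolding walk_def by (auto simp: less_Suc_eq_0_disj)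

lemma walk_append:
  "walk V E p \<Longrightarrow> walk V E q \<Longrightarrow> last p = hd q \<Longrightarrow> walk V E (p @ tl q)"
proof (induction p rule: induct_list012)
  case 1 then show ?case by (simp add: walk_def)
next
  case (2 u) then show ?case by (cases q) (auto simp: walk_def)
next
  case (3 u v p) then show ?case by (auto simp: walk_Cons_Cons)
qed

lemma walk_take: "walk V E p \<Longrightarrow> i < length p \<Longrightarrow> walk V E (take (Suc i) p)"
  unfolding walk_def by (auto dest: in_set_takeD)

lemma walk_drop: "walk V E p \<Longrightarrow> i < length p \<Longrightarrow> walk V E (drop i p)"
  unfolding walk_def by (auto dest: in_set_dropD)

lemma walk_map:
  assumes "\<And>v. v \<in> V \<Longrightarrow> f v \<in> V" and "\<And>u v. u \<in> V \<Longrightarrow> v \<in> V \<Longrightarrow> E u v \<Longrightarrow> E (f u) (f v)"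
    and "walk V E p"
  shows "walk V E (map f p)"
  using assms unfolding walk_def by (auto simp: subset_iff)

lemma walk_rev:
  assumes "walk V E p" shows "walk V E (rev p)"
  unfolding walk_def
proof (intro conjI allI impI)
  show "rev p \<noteq> []" "set (rev p) \<subseteq> V" using assms unfolding walk_def by auto
  fix i assume i: "Suc i < length (rev p)"
  define j where "j = length p - Suc (Suc i)"
  have "E (p ! j) (p ! Suc j)" using assms i unfolding walk_def j_def by simp
  moreover have "rev p ! i = p ! Suc j" "rev p ! Suc i = p ! j"
    using i by (simp_all add: rev_nth j_def Suc_diff_Suc)
  ultimately show "E (rev p ! i) (rev p ! Suc i)" by (simp add: edge_sym)
qed

lemma gdist_le_length:
  assumes "walk V E p" "hd p = u" "last p = v"
  shows "d u v \<le> length p - 1"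
proof -
  have "length p = Suc (length p - 1)" using assms(1) by (cases p) (auto simp: walk_def)
  then show ?thesis unfolding gdist_def using assms by (intro Least_le) metis
qed

lemma shortest_walk_exists:
  assumes "u \<in> V" "v \<in> V"
  obtains p where "walk V E p" "hd p = u" "last p = v" "length p = Suc (d u v)"
proof -
  obtain p where p: "walk V E p" "hd p = u" "last p = v"
    using connected assms unfolding connected_graph_def by blast
  have "length p = Suc (length p - 1)" using p(1) by (cases p) (auto simp: walk_def)
  then have "\<exists>n p. walk V E p \<and> hd p = u \<and> last p = v \<and> length p = Suc n" using p by blast
  from LeastI_ex[OF this] show ?thesis using that unfolding gdist_def by blast
qed

lemma gdist_self: "v \<in> V \<Longrightarrow> d v v = 0"
  using gdist_le_length[of "[v]"] by (simp add: walk_def)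

lemma gdist_eq_0_iff:
  assumes "u \<in> V" "v \<in> V" shows "d u v = 0 \<longleftrightarrow> u = v"
proof
  assume "d u v = 0"
  then obtain p where "walk V E p" "hd p = u" "last p = v" "length p = 1"
    using shortest_walk_exists[OF assms] by (metis One_nat_def)
  then show "u = v" by (cases p) auto
qed (use gdist_self assms in simp)

lemma gdist_sym:
  assumes "u \<in> V" "v \<in> V" shows "d u v = d v u"
proof -
  have "d b a \<le> d a b" if ab: "a \<in> V" "b \<in> V" for a b
  proof -
    obtain p where p: "walk V E p" "hd p = a" "last p = b" "length p = Suc (d a b)"
      using shortest_walk_exists[OF ab] .
    have "hd (rev p) = b" "last (rev p) = a" using p by (auto simp: hd_rev last_rev)
    then show ?thesis using gdist_le_length[OF walk_rev[OF p(1)]] p(4) by simp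
  qed
  then show ?thesis using assms by (simp add: le_antisym)
qed

lemma gdist_triangle:
  assumes "u \<in> V" "v \<in> V" "w \<in> V" shows "d u w \<le> d u v + d v w"
proof -
  obtain p where p: "walk V E p" "hd p = u" "last p = v" "length p = Suc (d u v)"
    using shortest_walk_exists assms by blast
  obtain q where q: "walk V E q" "hd q = v" "last q = w" "length q = Suc (d v w)"
    using shortest_walk_exists assms by blast
  have "hd (p @ tl q) = u" using p by (cases p) auto
  moreover have "last (p @ tl q) = w" using p q by (cases q) auto
  ultimately have "d u w \<le> length (p @ tl q) - 1"
    using gdist_le_length[OF walk_append[OF p(1) q(1)]] p(3) q(2) by simp
  then show ?thesis using p q by simp
qed

lemma gdist_eq_1_iff:
  assumes "u \<in> V" "v \<in> V" shows "d u v = 1 \<longleftrightarrow> E u v"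
proof
  assume "E u v"
  then have "d u v \<le> 1" using gdist_le_length[of "[u, v]"] assms by (simp add: walk_Cons_Cons walk_def)
  moreover have "u \<noteq> v" using \<open>E u v\<close> edge_irrefl by blast
  ultimately show "d u v = 1" using gdist_eq_0_iff assms by fastforce
next
  assume "d u v = 1"
  then obtain p where "walk V E p" "hd p = u" "last p = v" "length p = 2"
    using shortest_walk_exists[OF assms] by (metis one_add_one plus_1_eq_Suc)
  then show "E u v" by (auto simp: walk_Cons_Cons numeral_2_eq_2 length_Suc_conv)
qed

lemma gdist_first_step:
  assumes "u \<in> V" "v \<in> V" "u \<noteq> v"
  obtains w where "E u w" "Suc (d w v) = d u v"
proof -
  obtain p where p: "walk V E p" "hd p = u" "last p = v" "length p = Suc (d u v)"
    using shortest_walk_exists assms by blast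
  moreover have nonzero: "d u v \<noteq> 0" using assms gdist_eq_0_iff by blast
  ultimately obtain w p' where p_eq: "p = u # w # p'"
    by (cases p; cases "tl p") auto
  then have "E u w" "walk V E (w # p')" using p(1) by (auto simp: walk_Cons_Cons)
  then have "d w v \<le> d u v - 1" using gdist_le_length[of "w # p'" w v] p p_eq by simp
  moreover have "d u v \<le> 1 + d w v"
    using gdist_triangle[of u w v] gdist_eq_1_iff[of u w] \<open>E u w\<close> edge_in_V assms by auto
  ultimately show ?thesis using that \<open>E u w\<close> nonzero by simp
qed

lemma gdist_homomorphism_le:
  assumes "\<And>v. v \<in> V \<Longrightarrow> f v \<in> V" and "\<And>u v. u \<in> V \<Longrightarrow> v \<in> V \<Longrightarrow> E u v \<Longrightarrow> E (f u) (f v)"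
    and "a \<in> V" "b \<in> V"
  shows "d (f a) (f b) \<le> d a b"
proof -
  obtain p where p: "walk V E p" "hd p = a" "last p = b" "length p = Suc (d a b)"
    using shortest_walk_exists assms(3,4) by blast
  have "hd (map f p) = f a" "last (map f p) = f b" using p by (auto simp: hd_map last_map walk_def)
  then show ?thesis using gdist_le_length[OF walk_map[OF assms(1,2) p(1)]] p(4) by simp
qed

lemma gdist_automorphism:
  assumes aut: "graph_automorphism V E \<psi>" and "a \<in> V" "b \<in> V"
  shows "d (\<psi> a) (\<psi> b) = d a b"
proof -
  have bij: "bij_betw \<psi> V V" and E_iff: "\<And>u v. u \<in> V \<Longrightarrow> v \<in> V \<Longrightarrow> E u v \<longleftrightarrow> E (\<psi> u) (\<psi> v)"
    using aut unfolding graph_automorphism_def by auto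
  define \<psi>' where "\<psi>' = inv_into V \<psi>"
  have \<psi>'_V: "\<psi>' v \<in> V" and \<psi>_\<psi>': "\<psi> (\<psi>' v) = v" if "v \<in> V" for v
    using that bij bij_betw_inv_into_right bij_betw_imp_surj_on inv_into_into
    unfolding \<psi>'_def by metis+
  have \<psi>'_\<psi>: "\<psi>' (\<psi> v) = v" if "v \<in> V" for v
    using that bij bij_betw_inv_into_left unfolding \<psi>'_def by metis
  have \<psi>_V: "\<psi> v \<in> V" if "v \<in> V" for v using that bij bij_betwE by metis
  have "d (\<psi>' (\<psi> a)) (\<psi>' (\<psi> b)) \<le> d (\<psi> a) (\<psi> b)"
    by (rule gdist_homomorphism_le) (use \<psi>'_V \<psi>_\<psi>' E_iff \<psi>_V assms in auto)
  moreover have "d (\<psi> a) (\<psi> b) \<le> d a b"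
    by (rule gdist_homomorphism_le) (use \<psi>_V E_iff assms in auto)
  ultimately show ?thesis using \<psi>'_\<psi> assms by simp
qed

lemma halfspace_automorphism:
  assumes aut: "graph_automorphism V E \<psi>" and "a \<in> V" "b \<in> V" "w \<in> V"
  shows "\<psi> w \<in> H (\<psi> a) (\<psi> b) \<longleftrightarrow> w \<in> H a b"
proof -
  have "\<psi> w \<in> V" using aut assms(4) unfolding graph_automorphism_def by (metis bij_betwE)
  then show ?thesis using gdist_automorphism[OF aut] assms by (simp add: mem_halfspace)
qed

lemma shortest_path_gdist_split:
  assumes sp: "shortest_path V E p" and c: "c \<in> set p"
  shows "d (hd p) c + d c (last p) = d (hd p) (last p)"
proof -
  have w: "walk V E p" and len: "length p = Suc (d (hd p) (last p))"
    using sp unfolding shortest_path_def by auto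
  obtain i where i: "i < length p" "c = p ! i" using c by (metis in_set_conv_nth)
  have "hd (take (Suc i) p) = hd p" "last (take (Suc i) p) = c"
    using i by (cases p, simp_all add: take_Suc_conv_app_nth)
  then have "d (hd p) c \<le> i" using gdist_le_length[OF walk_take[OF w i(1)]] i by simp
  moreover have "hd (drop i p) = c" "last (drop i p) = last p"
    using i by (auto simp: hd_drop_conv_nth)
  then have "d c (last p) \<le> length p - Suc i" using gdist_le_length[OF walk_drop[OF w i(1)]] by simp
  moreover have "d (hd p) (last p) \<le> d (hd p) c + d c (last p)"
    using gdist_triangle w c unfolding walk_def by (metis hd_in_set last_in_set subset_iff)
  ultimately show ?thesis using len i by linarith
qed

lemma gdist_induced_convex:
  assumes conv: "convex_set V E W" and "a \<in> W" "b \<in> W"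
  shows "gdist W (induced E W) a b = d a b"
proof -
  have "W \<subseteq> V" using conv unfolding convex_set_def by blast
  then obtain p where p: "walk V E p" "hd p = a" "last p = b" "length p = Suc (d a b)"
    using shortest_walk_exists assms by blast
  then have "set p \<subseteq> W" using conv assms unfolding convex_set_def shortest_path_def by blast
  then have "walk W (induced E W) p" using p(1) unfolding walk_def induced_def by (auto simp: subset_iff)
  then have ex: "\<exists>n q. walk W (induced E W) q \<and> hd q = a \<and> last q = b \<and> length q = Suc n"
    and le: "gdist W (induced E W) a b \<le> d a b"
    using p unfolding gdist_def[of W] by (blast, (intro Least_le; blast))
  obtain q where q: "walk W (induced E W) q" "hd q = a" "last q = b"
    "length q = Suc (gdist W (induced E W) a b)"
    using LeastI_ex[OF ex] unfolding gdist_def[of W] by blast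
  have "walk V E q" using q(1) \<open>W \<subseteq> V\<close> unfolding walk_def induced_def by auto
  then show ?thesis using gdist_le_length[of q a b] q le by simp
qed

lemma halfspace_gdist_Suc:
  assumes "E x y" "a \<in> H x y" shows "d a y = Suc (d a x)"
  using gdist_triangle[of a x y] gdist_eq_1_iff[of x y] edge_in_V[OF assms(1)] assms
  by (auto simp: mem_halfspace)

lemma halfspace_step_towards:
  assumes xy: "E x y" and a: "a \<in> H x y" "a \<noteq> x"
  obtains a' where "E a a'" "a' \<in> H x y" "Suc (d a' x) = d a x"
proof -
  have V: "a \<in> V" "x \<in> V" "y \<in> V" using a edge_in_V[OF xy] by (auto simp: mem_halfspace)
  obtain a' where a': "E a a'" "Suc (d a' x) = d a x" using gdist_first_step[OF V(1,2) a(2)] .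
  have "a' \<in> V" using edge_in_V[OF a'(1)] by blast
  then have "d a y \<le> d a a' + d a' y" using gdist_triangle V by blast
  moreover have "d a a' = 1" using gdist_eq_1_iff V(1) \<open>a' \<in> V\<close> a'(1) by blast
  ultimately have "a' \<in> H x y" using halfspace_gdist_Suc[OF xy a(1)] a'(2) \<open>a' \<in> V\<close>
    by (simp add: mem_halfspace)
  then show ?thesis using that a' by blast
qed

lemma halfspace_subset_if_edge_closed:
  assumes xy: "E x y" and "x \<in> P"
    and closed: "\<And>w w'. w \<in> H x y \<Longrightarrow> w \<in> P \<Longrightarrow> w' \<in> H x y \<Longrightarrow> E w w' \<Longrightarrow> w' \<in> P"
  shows "H x y \<subseteq> P"
proof -
  have "w \<in> P" if "w \<in> H x y" "d w x = n" for n w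
    using that
  proof (induction n arbitrary: w)
    case 0
    then have "w = x" using gdist_eq_0_iff edge_in_V[OF xy] by (auto simp: mem_halfspace)
    then show ?case using \<open>x \<in> P\<close> by simp
  next
    case (Suc n)
    have "w \<noteq> x" using Suc.prems gdist_self by (auto simp: mem_halfspace)
    then obtain w' where "E w w'" "w' \<in> H x y" "Suc (d w' x) = d w x"
      using halfspace_step_towards[OF xy Suc.prems(1)] by blast
    then show ?case using Suc closed[of w' w] edge_sym by simp
  qed
  then show ?thesis by blast
qed

section \<open>Reflections\<close>

context
  fixes u v \<rho> assumes refl: "reflection V E u v \<rho>" and uv: "E u v"
begin

lemma reflection_automorphism: "graph_automorphism V E \<rho>"
  using refl unfolding reflection_def by (elim conjE)

lemma reflection_in_V: "w \<in> V \<Longrightarrow> \<rho> w \<in> V"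
  using reflection_automorphism unfolding graph_automorphism_def by (metis bij_betwE)

lemma reflection_involutive: "w \<in> V \<Longrightarrow> \<rho> (\<rho> w) = w"
  using refl unfolding reflection_def by (elim conjE) simp

lemma reflection_edge: "a \<in> V \<Longrightarrow> b \<in> V \<Longrightarrow> E a b \<Longrightarrow> E (\<rho> a) (\<rho> b)"
  using reflection_automorphism unfolding graph_automorphism_def by blast

lemma reflection_gdist: "a \<in> V \<Longrightarrow> b \<in> V \<Longrightarrow> d (\<rho> a) (\<rho> b) = d a b"
  using gdist_automorphism[OF reflection_automorphism] .

lemma reflection_swaps_ends: "\<rho> u = v" "\<rho> v = u"
proof -
  show "\<rho> u = v" using refl unfolding reflection_def by (elim conjE)
  then show "\<rho> v = u" using reflection_involutive edge_in_V[OF uv] by metis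
qed

lemma reflection_fixes_midset: "w \<in> M u v \<Longrightarrow> \<rho> w = w"
  using refl unfolding reflection_def by (elim conjE) simp

lemma reflection_swaps_halfspaces: "w \<in> H u v \<Longrightarrow> \<rho> w \<in> H v u" "w \<in> H v u \<Longrightarrow> \<rho> w \<in> H u v"
  using halfspace_automorphism[OF reflection_automorphism, of u v w]
    halfspace_automorphism[OF reflection_automorphism, of v u w]
    reflection_swaps_ends edge_in_V[OF uv] by (auto simp: mem_halfspace)

lemma reflection_edge_sets:
  "{{a, b} | a b. a \<in> H u v \<and> b \<in> H v u \<and> E a b} = {{a, \<rho> a} | a. a \<in> H u v}"
  using refl unfolding reflection_def by (elim conjE)

lemma reflection_edge_across: "w \<in> H u v \<Longrightarrow> E w (\<rho> w)"
proof -
  assume "w \<in> H u v"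
  then have "{w, \<rho> w} \<in> {{a, b} | a b. a \<in> H u v \<and> b \<in> H v u \<and> E a b}"
    using reflection_edge_sets by blast
  then obtain a b where "{w, \<rho> w} = {a, b}" "E a b" by blast
  then show "E w (\<rho> w)" using edge_sym by (auto simp: doubleton_eq_iff)
qed

lemma reflection_crossing_edge:
  assumes "a \<in> H u v" "b \<in> H v u" "E a b" shows "b = \<rho> a"
proof -
  have "{a, b} \<in> {{a, \<rho> a} | a. a \<in> H u v}" using assms reflection_edge_sets by blast
  then obtain w where w: "{a, b} = {w, \<rho> w}" "w \<in> H u v" by blast
  have "b \<noteq> w" using w(2) assms(2) by (auto simp: mem_halfspace)
  then show ?thesis using w(1) by (auto simp: doubleton_eq_iff)
qed

lemma reflection_sym: "reflection V E v u \<rho>"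
proof -
  have cross: "b = \<rho> a" if "a \<in> H v u" "b \<in> H u v" "E a b" for a b
    using reflection_crossing_edge[OF that(2,1) edge_sym[OF that(3)]] reflection_involutive that(2)
    by (auto simp: mem_halfspace)
  have "{{a, b} | a b. a \<in> H v u \<and> b \<in> H u v \<and> E a b} = {{a, \<rho> a} | a. a \<in> H v u}"
  proof (intro equalityI subsetI)
    fix e assume "e \<in> {{a, b} | a b. a \<in> H v u \<and> b \<in> H u v \<and> E a b}"
    then show "e \<in> {{a, \<rho> a} | a. a \<in> H v u}" using cross by blast
  next
    fix e assume "e \<in> {{a, \<rho> a} | a. a \<in> H v u}"
    then obtain a where a: "e = {a, \<rho> a}" "a \<in> H v u" by blast
    then have "E (\<rho> a) (\<rho> (\<rho> a))" using reflection_edge_across reflection_swaps_halfspaces by blast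
    then have "E a (\<rho> a)" using reflection_involutive edge_sym a(2) by (simp add: mem_halfspace)
    then show "e \<in> {{a, b} | a b. a \<in> H v u \<and> b \<in> H u v \<and> E a b}"
      using a reflection_swaps_halfspaces by blast
  qed
  moreover have "M v u = M u v" by (auto simp: mem_midset)
  ultimately show ?thesis
    using reflection_automorphism reflection_involutive reflection_swaps_ends reflection_fixes_midset
    unfolding reflection_def by simp
qed

lemma reflection_image_in_halfspace:
  assumes xy: "E x y" and x: "x \<in> H u v" and y: "y \<in> H u v"
  shows "\<rho> x \<in> H x y"
proof -
  let ?q = "\<rho> x"
  have V: "x \<in> V" "y \<in> V" "?q \<in> V" using edge_in_V[OF xy] reflection_in_V by auto
  have q: "E x ?q" "?q \<in> H v u" using reflection_edge_across reflection_swaps_halfspaces x by auto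
  have "?q \<noteq> y" using q(2) y by (auto simp: mem_halfspace)
  moreover have "\<not> E ?q y"
  proof
    assume "E ?q y"
    then have "?q = \<rho> y" using reflection_crossing_edge[OF y q(2)] edge_sym by blast
    then have "x = y" using reflection_involutive V by metis
    then show False using xy edge_irrefl by simp
  qed
  ultimately have "d ?q y \<noteq> 0" "d ?q y \<noteq> 1" using gdist_eq_0_iff gdist_eq_1_iff V by auto
  moreover have "d ?q x = 1" using gdist_eq_1_iff V edge_sym q(1) by blast
  ultimately show ?thesis using V by (simp add: mem_halfspace)
qed

end

lemma reflection_restrict_convex:
  assumes refl: "reflection V E u v \<sigma>" and uv: "E u v" and conv: "convex_set V E W"
    and "u \<in> W" "v \<in> W" and maps: "\<And>w. w \<in> W \<Longrightarrow> \<sigma> w \<in> W"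
  shows "reflection W (induced E W) u v \<sigma>"
proof -
  let ?E = "induced E W"
  have W: "W \<subseteq> V" using conv unfolding convex_set_def by blast
  have H_W: "halfspace W ?E a b = H a b \<inter> W" and M_W: "midset W ?E a b = M a b \<inter> W"
    if "a \<in> W" "b \<in> W" for a b
    using gdist_induced_convex[OF conv] that W
    by (auto simp: halfspace_def midset_def)
  have bij: "bij_betw \<sigma> W W"
    by (rule bij_betw_byWitness[where f' = \<sigma>]) (use maps reflection_involutive[OF refl uv] W in auto)
  have aut: "graph_automorphism W ?E \<sigma>"
    using bij reflection_automorphism[OF refl uv] maps W
    unfolding graph_automorphism_def induced_def by (auto simp: subset_iff)
  have "{{a, b} | a b. a \<in> halfspace W ?E u v \<and> b \<in> halfspace W ?E v u \<and> ?E a b}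
      = {{a, \<sigma> a} | a. a \<in> halfspace W ?E u v}"
  proof (intro equalityI subsetI)
    fix e assume "e \<in> {{a, b} | a b. a \<in> halfspace W ?E u v \<and> b \<in> halfspace W ?E v u \<and> ?E a b}"
    then show "e \<in> {{a, \<sigma> a} | a. a \<in> halfspace W ?E u v}"
      using reflection_crossing_edge[OF refl uv] H_W \<open>u \<in> W\<close> \<open>v \<in> W\<close>
      unfolding induced_def by blast
  next
    fix e assume "e \<in> {{a, \<sigma> a} | a. a \<in> halfspace W ?E u v}"
    then show "e \<in> {{a, b} | a b. a \<in> halfspace W ?E u v \<and> b \<in> halfspace W ?E v u \<and> ?E a b}"
      using reflection_swaps_halfspaces[OF refl uv] reflection_edge_across[OF refl uv] maps
        H_W \<open>u \<in> W\<close> \<open>v \<in> W\<close> unfolding induced_def by blast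
  qed
  then show ?thesis
    using aut reflection_involutive[OF refl uv] reflection_swaps_ends[OF refl uv]
      reflection_fixes_midset[OF refl uv] M_W \<open>u \<in> W\<close> \<open>v \<in> W\<close> W
    unfolding reflection_def by auto
qed

end

section \<open>Halfspaces of reflective graphs\<close>

locale reflective_graph = connected_simple_graph +
  assumes reflective: "reflective V E"
begin

lemma reflection_exists:
  assumes "E u v" obtains \<rho> where "reflection V E u v \<rho>"
  using reflective edge_in_V[OF assms] assms that unfolding reflective_def by blast

context
  fixes x y \<phi> assumes refl: "reflection V E x y \<phi>" and xy: "E x y"
begin

lemma halfspace_subset_parallel:
  assumes q: "q \<in> H x y" shows "H x y \<subseteq> H q (\<phi> q)"
proof -
  have V: "x \<in> V" "y \<in> V" "q \<in> V" "\<phi> q \<in> V"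
    using edge_in_V[OF xy] q reflection_in_V[OF refl xy] by (auto simp: mem_halfspace)
  have q_edge: "E q (\<phi> q)" using reflection_edge_across[OF refl xy q] .
  obtain \<rho> where \<rho>: "reflection V E q (\<phi> q) \<rho>" using reflection_exists[OF q_edge] .
  have dq: "d x q < d y q" using halfspace_gdist_Suc[OF xy q] gdist_sym V by simp
  have "d x (\<phi> q) = d y q"
    using reflection_gdist[OF refl xy, of x "\<phi> q"] reflection_involutive[OF refl xy] reflection_swaps_ends[OF refl xy] V
    by simp
  then have x_side: "x \<in> H q (\<phi> q)" using dq V by (simp add: mem_halfspace)
  have "d y (\<phi> q) = d x q"
    using reflection_gdist[OF refl xy, of x q] reflection_swaps_ends[OF refl xy] V by simp
  then have "y \<in> H (\<phi> q) q" using dq V by (simp add: mem_halfspace)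
  then have "\<rho> x = y" "\<rho> y = x"
    using reflection_crossing_edge[OF \<rho> q_edge x_side _ xy] reflection_involutive[OF \<rho> q_edge] V
    by auto
  then have \<rho>_swaps: "\<rho> w \<in> H y x" if "w \<in> H x y" for w
    using halfspace_automorphism[OF reflection_automorphism[OF \<rho> q_edge], of x y w] V that
    by (simp add: mem_halfspace)
  show ?thesis
  proof (rule halfspace_subset_if_edge_closed[OF xy x_side])
    fix w w' assume w: "w \<in> H x y" "w \<in> H q (\<phi> q)" and w': "w' \<in> H x y" and "E w w'"
    show "w' \<in> H q (\<phi> q)"
    proof (rule ccontr)
      assume "w' \<notin> H q (\<phi> q)"
      moreover have "w' \<notin> M q (\<phi> q)"
        using reflection_fixes_midset[OF \<rho> q_edge] \<rho>_swaps[OF w'] w' by (force simp: mem_halfspace)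
      ultimately have "w' \<in> H (\<phi> q) q" using halfspace_trichotomy w' by (blast dest: mem_halfspace[THEN iffD1])
      then have "w' = \<rho> w" using reflection_crossing_edge[OF \<rho> q_edge w(2)] \<open>E w w'\<close> by blast
      then show False using \<rho>_swaps[OF w(1)] w' by (simp add: mem_halfspace)
    qed
  qed
qed

lemma halfspace_parallel:
  assumes q: "q \<in> H x y" shows "H q (\<phi> q) = H x y"
proof
  show "H x y \<subseteq> H q (\<phi> q)" using halfspace_subset_parallel[OF q] .
  have V: "q \<in> V" "\<phi> q \<in> V" using q reflection_in_V[OF refl xy] by (auto simp: mem_halfspace)
  show "H q (\<phi> q) \<subseteq> H x y"
  proof (rule subsetI, rule ccontr)
    fix w assume w: "w \<in> H q (\<phi> q)" and "w \<notin> H x y"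
    then have wV: "w \<in> V" by (simp add: mem_halfspace)
    have swap: "d (\<phi> w) q = d w (\<phi> q)" "d (\<phi> w) (\<phi> q) = d w q"
      using reflection_gdist[OF refl xy] reflection_involutive[OF refl xy] V wV by metis+
    consider "w \<in> H y x" | "w \<in> M x y" using halfspace_trichotomy wV \<open>w \<notin> H x y\<close> by blast
    then show False
    proof cases
      case 1
      then have "\<phi> w \<in> H q (\<phi> q)"
        using halfspace_subset_parallel[OF q] reflection_sym[OF refl xy] reflection_swaps_halfspaces[OF refl xy]
        by blast
      then show False using w swap by (simp add: mem_halfspace)
    next
      case 2
      then show False using w swap reflection_fixes_midset[OF refl xy] by (simp add: mem_halfspace)
    qed
  qed
qed

lemma halfspace_convex: "convex_set V E (H x y)"
  unfolding convex_set_def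
proof (intro conjI allI impI subsetI)
  show "w \<in> V" if "w \<in> H x y" for w using that by (simp add: mem_halfspace)
next
  fix p c assume p: "shortest_path V E p \<and> hd p \<in> H x y \<and> last p \<in> H x y" and c: "c \<in> set p"
  let ?h = "hd p" and ?l = "last p"
  have V: "?h \<in> V" "?l \<in> V" "c \<in> V" "\<phi> c \<in> V" "\<phi> ?l \<in> V"
    using p c reflection_in_V[OF refl xy] unfolding shortest_path_def walk_def by (auto simp: mem_halfspace)
  have split: "d ?h c + d c ?l = d ?h ?l" using shortest_path_gdist_split p c by blast
  show "c \<in> H x y"
  proof (rule ccontr)
    assume "c \<notin> H x y"
    then consider "c \<in> H y x" | "c \<in> M x y" using halfspace_trichotomy V by blast
    then show False
    proof cases
      case 1
      then have "\<phi> c \<in> H x y" using reflection_swaps_halfspaces[OF refl xy] by blast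
      then have "H (\<phi> c) c = H x y"
        using halfspace_parallel reflection_involutive[OF refl xy] V by metis
      then have "d ?h (\<phi> c) < d ?h c" "d ?l (\<phi> c) < d ?l c" using p by (auto simp: mem_halfspace)
      moreover have "d ?h ?l \<le> d ?h (\<phi> c) + d (\<phi> c) ?l" using gdist_triangle V by blast
      ultimately show False using split gdist_sym V by simp
    next
      case 2
      have "?h \<in> H ?l (\<phi> ?l)" using halfspace_parallel p by blast
      then have "d ?h ?l < d ?h (\<phi> ?l)" by (simp add: mem_halfspace)
      also have "\<dots> \<le> d ?h c + d c (\<phi> ?l)" using gdist_triangle V by blast
      also have "d c (\<phi> ?l) = d c ?l"
        using reflection_gdist[OF refl xy, of c ?l] reflection_fixes_midset[OF refl xy 2] V by simp
      finally show False using split by simp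
    qed
  qed
qed

lemma reflection_preserves_halfspace:
  assumes u: "u \<in> H x y" and v: "v \<in> H x y" and uv: "E u v" and \<sigma>: "reflection V E u v \<sigma>"
    and w: "w \<in> H x y"
  shows "\<sigma> w \<in> H x y"
proof -
  have V: "x \<in> V" "y \<in> V" "u \<in> V" "v \<in> V" "w \<in> V"
    using edge_in_V[OF xy] u v w by (auto simp: mem_halfspace)
  have moved: "H (\<sigma> x) (\<sigma> y) = H x y"
    if ab: "reflection V E a b \<sigma>" "E a b" and "x \<in> H a b" "y \<in> H a b" for a b
  proof -
    have q: "\<sigma> x \<in> H x y" using reflection_image_in_halfspace[OF ab xy that(3,4)] .
    have "\<sigma> y \<in> H y x" using reflection_image_in_halfspace[OF ab edge_sym[OF xy] that(4,3)] .
    moreover have "E (\<sigma> x) (\<sigma> y)" using reflection_edge[OF ab] V xy by blast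
    ultimately have "\<sigma> y = \<phi> (\<sigma> x)" using reflection_crossing_edge[OF refl xy q] by blast
    then show ?thesis using halfspace_parallel[OF q] by simp
  qed
  have "d y u = Suc (d x u)" "d y v = Suc (d x v)"
    using halfspace_gdist_Suc[OF xy] u v gdist_sym V by auto
  then consider "x \<in> H u v" "y \<in> H u v" | "x \<in> H v u" "y \<in> H v u" | "x \<in> M u v" "y \<in> M u v"
    using V by (auto simp: mem_halfspace mem_midset) linarith
  then have "H (\<sigma> x) (\<sigma> y) = H x y"
    using moved[OF \<sigma> uv] moved[OF reflection_sym[OF \<sigma> uv] edge_sym[OF uv]]
      reflection_fixes_midset[OF \<sigma> uv] by cases auto
  then show ?thesis
    using halfspace_automorphism[OF reflection_automorphism[OF \<sigma> uv], of x y w] V w by simp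
qed

lemma reflective_halfspace: "reflective (H x y) (induced E (H x y))"
  unfolding reflective_def
proof (intro ballI impI)
  fix u v assume u: "u \<in> H x y" and v: "v \<in> H x y" and "induced E (H x y) u v"
  then have uv: "E u v" by (simp add: induced_def)
  obtain \<sigma> where \<sigma>: "reflection V E u v \<sigma>" using reflection_exists[OF uv] .
  show "\<exists>\<sigma>. reflection (H x y) (induced E (H x y)) u v \<sigma>"
    using reflection_restrict_convex[OF \<sigma> uv halfspace_convex u v]
      reflection_preserves_halfspace[OF u v uv \<sigma>] by blast
qed

end

end

theorem lemma2p9:
  fixes V :: "'a set" and E :: "'a \<Rightarrow> 'a \<Rightarrow> bool" and x y :: 'a
  assumes "simple_graph V E" and "connected_graph V E" and "reflective V E"
    and "E x y"
  shows "convex_set V E (halfspace V E x y)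
    \<and> reflective (halfspace V E x y) (induced E (halfspace V E x y))"
proof -
  interpret reflective_graph V E
    by unfold_locales (use assms in auto)
  obtain \<phi> where "reflection V E x y \<phi>" using reflection_exists[OF assms(4)] .
  then show ?thesis using halfspace_convex reflective_halfspace assms(4) by blast
qed

end
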